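(* Let $(H,\prec,\cdot,\succ,\Delta)$ be a $q$-tridendriform bialgebra and let $M_{1n}$ be the brace operations associated to the dendriform algebra $(H,\prec,q\,\cdot+\succ)$. If $x,y,z_1,\dots,z_n\in H$ are primitive, then $M_{1n}(x;z_1,\dots,z_n)$ and $x\cdot y$ are primitive. Consequently the subspace $\mathrm{Prim}(H)$ of primitive elements is a sub-$GV_q$-algebra of $(H,M_{1n},\cdot)$.
   Context: $q$-tridendriform algebra: a vector space $H$ with bilinear $\prec,\cdot,\succ$ satisfying (1) $(a\prec b)\prec c=a\prec(b\prec c+b\succ c+q\,b\cdot c)$; (2) $(a\succ b)\prec c=a\succ(b\prec c)$; (3) $(a\prec b+a\succ b+q\,a\cdot b)\succ c=a\succ(b\succ c)$; (4) $(a\cdot b)\cdot c=a\cdot(b\cdot c)$; (5) $(a\succ b)\cdot c=a\succ(b\cdot c)$; (6) $(a\prec b)\cdot c=a\cdot(b\succ c)$; (7) $(a\cdot b)\prec c=a\cdot(b\prec c)$. Put $*:=\prec+q\,\cdot+\succ$. Unit conventions: $H_+:=H\oplus\mathbb{K}1$, $\epsilon:H_+\to\mathbb{K}$ the projection onto $\mathbb{K}$; for $x\in H$: $x\succ1=x\cdot1=1\cdot x=1\prec x=0$, $1\succ x=x=x\prec1$, $1*x=x*1=x$; moreover in tensor expressions one sets $(x*y)\otimes(1\succ1):=(x\succ y)\otimes1$, $(x*y)\otimes(1\cdot1):=(x\cdot y)\otimes1$, $(x*y)\otimes(1\prec1):=(x\prec y)\otimes1$. A $q$-tridendriform bialgebra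 is a $q$-tridendriform algebra $H$ with a linear map $\Delta:H_+\to H_+\otimes H_+$ such that $\Delta(1)=1\otimes1$, $(\epsilon\otimes\mathrm{Id})\Delta(x)=1\otimes x$, $(\mathrm{Id}\otimes\epsilon)\Delta(x)=x\otimes1$, and $\Delta(x\circ y)=\sum(x_{(1)}*y_{(1)})\otimes(x_{(2)}\circ y_{(2)})$ for $\circ\in\{\succ,\cdot,\prec\}$ and $x,y\in H$, where $\Delta(x)=\sum x_{(1)}\otimes x_{(2)}$ in $H_+\otimes H_+$. An element $x\in H$ is primitive if $\Delta(x)=x\otimes1+1\otimes x$. Brace operations of the dendriform algebra $(H,\prec,\tilde\succ)$, $\tilde\succ=q\,\cdot+\succ$: $\omega_\prec(y_1,\dots,y_i)=y_1\prec(y_2\prec(\cdots\prec y_i))$, $\omega_{\tilde\succ}(y_{i+1},\dots,y_n)=((y_{i+1}\tilde\succ y_{i+2})\tilde\succ\cdots)\tilde\succ y_n$, empty $\omega=1$; $M_{10}=\mathrm{Id}$ and $M_{1n}(x;y_1,\dots,y_n)=\sum_{i=0}^n(-1)^{n-i}(\omega_\prec(y_1,\dots,y_i)\tilde\succ x)\prec\omega_{\tilde\succ}(y_{i+1},\dots,y_n)$. A $GV_q$ algebra is a brace algebra $(B,M_{1n})$ with an associative product $\cdot$ satisfying $M_{1n}(x\cdot y;z_1,\dots,z_n)=\sum_{0\le i\le j\le n}q^{j-i}M_{1i}(x;z_1,\dots,z_i)\cdot z_{i+1}\cdots z_j\cdot M_{1(n-j)}(y;z_{j+1},\dots,z_n)$;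 $(H,M_{1n},\cdot)$ is a $GV_q$ algebra. *)

theory Defs
  imports Complex_Main "HOL-Library.Product_Plus"
begin

text \<open>H is a vector space over the field 'k with scalar multiplication sc.
  The augmented space H_+ = H \<oplus> K1 is modelled as pairs (x, c) meaning x + c 1.\<close>

type_synonym ('h,'k) aug = "'h \<times> 'k"

definition scaleA :: "('k::field \<Rightarrow> 'h::ab_group_add \<Rightarrow> 'h) \<Rightarrow> 'k \<Rightarrow> ('h,'k) aug \<Rightarrow> ('h,'k) aug" where
  "scaleA sc c a = (sc c (fst a), c * snd a)"

definition eps :: "('h,'k) aug \<Rightarrow> 'k" where
  "eps a = snd a"

definition unitA :: "('h::zero,'k::one) aug" where
  "unitA = (0, 1)"

definition incl :: "'h \<Rightarrow> ('h,'k::zero) aug" where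
  "incl x = (x, 0)"

definition bilinear_op :: "('k::field \<Rightarrow> 'h::ab_group_add \<Rightarrow> 'h) \<Rightarrow> ('h \<Rightarrow> 'h \<Rightarrow> 'h) \<Rightarrow> bool" where
  "bilinear_op sc f \<longleftrightarrow>
     (\<forall>x y z. f (x + y) z = f x z + f y z) \<and>
     (\<forall>x y z. f x (y + z) = f x y + f x z) \<and>
     (\<forall>c x y. f (sc c x) y = sc c (f x y)) \<and>
     (\<forall>c x y. f x (sc c y) = sc c (f x y))"

text \<open>An element of H_+ \<otimes> H_+ is represented by a finite list of pure tensors
  (a list [(a1,b1),...] stands for the sum of the ai \<otimes> bi).  Two representations
  denote the same tensor iff every bilinear form H_+ \<times> H_+ \<rightarrow> K takes the same
  value on them (over a field, bilinear forms separate points of V \<otimes> W).\<close>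

type_synonym ('h,'k) tens = "(('h,'k) aug \<times> ('h,'k) aug) list"

definition bilinear_form :: "('k::field \<Rightarrow> 'h::ab_group_add \<Rightarrow> 'h) \<Rightarrow> (('h,'k) aug \<Rightarrow> ('h,'k) aug \<Rightarrow> 'k) \<Rightarrow> bool" where
  "bilinear_form sc \<phi> \<longleftrightarrow>
     (\<forall>a a' b. \<phi> (a + a') b = \<phi> a b + \<phi> a' b) \<and>
     (\<forall>a b b'. \<phi> a (b + b') = \<phi> a b + \<phi> a b') \<and>
     (\<forall>c a b. \<phi> (scaleA sc c a) b = c * \<phi> a b) \<and>
     (\<forall>c a b. \<phi> a (scaleA sc c b) = c * \<phi> a b)"

definition teq :: "('k::field \<Rightarrow> 'h::ab_group_add \<Rightarrow> 'h) \<Rightarrow> ('h,'k) tens \<Rightarrow> ('h,'k) tens \<Rightarrow> bool" where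
  "teq sc t u \<longleftrightarrow>
     (\<forall>\<phi>. bilinear_form sc \<phi> \<longrightarrow>
        sum_list (map (\<lambda>(a,b). \<phi> a b) t) = sum_list (map (\<lambda>(a,b). \<phi> a b) u))"

definition tscale :: "('k::field \<Rightarrow> 'h::ab_group_add \<Rightarrow> 'h) \<Rightarrow> 'k \<Rightarrow> ('h,'k) tens \<Rightarrow> ('h,'k) tens" where
  "tscale sc c t = map (\<lambda>(a,b). (scaleA sc c a, b)) t"

definition starA :: "('k::field \<Rightarrow> 'h::ab_group_add \<Rightarrow> 'h) \<Rightarrow> ('h \<Rightarrow> 'h \<Rightarrow> 'h) \<Rightarrow> ('h \<Rightarrow> 'h \<Rightarrow> 'h)
    \<Rightarrow> ('h \<Rightarrow> 'h \<Rightarrow> 'h) \<Rightarrow> 'k \<Rightarrow> ('h,'k) aug \<Rightarrow> ('h,'k) aug \<Rightarrow> ('h,'k) aug" where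
  "starA sc prec dot succ q a c =
     (prec (fst a) (fst c) + sc q (dot (fst a) (fst c)) + succ (fst a) (fst c)
        + sc (snd c) (fst a) + sc (snd a) (fst c),
      snd a * snd c)"

text \<open>The three operations extended (bilinearly) to H_+ \<times> H_+ with values in H,
  using x \<succ> 1 = 0, 1 \<succ> x = x;  x \<cdot> 1 = 1 \<cdot> x = 0;  x \<prec> 1 = x, 1 \<prec> x = 0.
  The undefined value 1 \<circ> 1 is treated separately (see tprod).\<close>
definition ext_succ :: "('k::field \<Rightarrow> 'h::ab_group_add \<Rightarrow> 'h) \<Rightarrow> ('h \<Rightarrow> 'h \<Rightarrow> 'h) \<Rightarrow> ('h,'k) aug \<Rightarrow> ('h,'k) aug \<Rightarrow> 'h" where
  "ext_succ sc succ a b = succ (fst a) (fst b) + sc (snd a) (fst b)"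

definition ext_dot :: "('h \<Rightarrow> 'h \<Rightarrow> 'h) \<Rightarrow> ('h,'k) aug \<Rightarrow> ('h,'k) aug \<Rightarrow> 'h" where
  "ext_dot dot a b = dot (fst a) (fst b)"

definition ext_prec :: "('k::field \<Rightarrow> 'h::ab_group_add \<Rightarrow> 'h) \<Rightarrow> ('h \<Rightarrow> 'h \<Rightarrow> 'h) \<Rightarrow> ('h,'k) aug \<Rightarrow> ('h,'k) aug \<Rightarrow> 'h" where
  "ext_prec sc prec a b = prec (fst a) (fst b) + sc (snd b) (fst a)"

text \<open>Product on H_+ \<otimes> H_+ for an operation \<circ> (given by its extension E):
  (a \<otimes> b)(c \<otimes> d) = (a * c) \<otimes> (b \<circ> d), where the component involving 1 \<circ> 1
  is replaced, by the convention (x*y) \<otimes> (1\<circ>1) := (x\<circ>y) \<otimes> 1, by (a \<circ> c) \<otimes> 1.\<close>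
definition tprod :: "('k::field \<Rightarrow> 'h::ab_group_add \<Rightarrow> 'h) \<Rightarrow> (('h,'k) aug \<Rightarrow> ('h,'k) aug \<Rightarrow> ('h,'k) aug)
    \<Rightarrow> (('h,'k) aug \<Rightarrow> ('h,'k) aug \<Rightarrow> 'h) \<Rightarrow> ('h,'k) tens \<Rightarrow> ('h,'k) tens \<Rightarrow> ('h,'k) tens" where
  "tprod sc star E t u =
     concat (map (\<lambda>(a,b). concat (map (\<lambda>(c,d).
        [(star a c, incl (E b d)),
         (scaleA sc (snd b * snd d) (incl (E a c)), unitA)]) u)) t)"

definition q_tridendriform ::
  "('k::field \<Rightarrow> 'h::ab_group_add \<Rightarrow> 'h) \<Rightarrow> 'k \<Rightarrow> ('h \<Rightarrow> 'h \<Rightarrow> 'h) \<Rightarrow> ('h \<Rightarrow> 'h \<Rightarrow> 'h) \<Rightarrow> ('h \<Rightarrow> 'h \<Rightarrow> 'h) \<Rightarrow> bool" where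
  "q_tridendriform sc q prec dot succ \<longleftrightarrow>
     vector_space sc \<and> bilinear_op sc prec \<and> bilinear_op sc dot \<and> bilinear_op sc succ \<and>
     (\<forall>a b c. prec (prec a b) c = prec a (prec b c + succ b c + sc q (dot b c))) \<and>
     (\<forall>a b c. prec (succ a b) c = succ a (prec b c)) \<and>
     (\<forall>a b c. succ (prec a b + succ a b + sc q (dot a b)) c = succ a (succ b c)) \<and>
     (\<forall>a b c. dot (dot a b) c = dot a (dot b c)) \<and>
     (\<forall>a b c. dot (succ a b) c = succ a (dot b c)) \<and>
     (\<forall>a b c. dot (prec a b) c = dot a (succ b c)) \<and>
     (\<forall>a b c. prec (dot a b) c = dot a (prec b c))"

text \<open>Delta is given on H (Delta(1) = 1 \<otimes> 1 is forced); it is linear (up to tensor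
  equality), counital, and compatible with the three products.\<close>
definition q_tridendriform_bialgebra ::
  "('k::field \<Rightarrow> 'h::ab_group_add \<Rightarrow> 'h) \<Rightarrow> 'k \<Rightarrow> ('h \<Rightarrow> 'h \<Rightarrow> 'h) \<Rightarrow> ('h \<Rightarrow> 'h \<Rightarrow> 'h) \<Rightarrow> ('h \<Rightarrow> 'h \<Rightarrow> 'h)
     \<Rightarrow> ('h \<Rightarrow> ('h,'k) tens) \<Rightarrow> bool" where
  "q_tridendriform_bialgebra sc q prec dot succ \<Delta> \<longleftrightarrow>
     q_tridendriform sc q prec dot succ \<and>
     (\<forall>x y. teq sc (\<Delta> (x + y)) (\<Delta> x @ \<Delta> y)) \<and>
     (\<forall>c x. teq sc (\<Delta> (sc c x)) (tscale sc c (\<Delta> x))) \<and>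
     (\<forall>x. sum_list (map (\<lambda>(a,b). scaleA sc (eps a) b) (\<Delta> x)) = incl x) \<and>
     (\<forall>x. sum_list (map (\<lambda>(a,b). scaleA sc (eps b) a) (\<Delta> x)) = incl x) \<and>
     (\<forall>x y. teq sc (\<Delta> (succ x y))
              (tprod sc (starA sc prec dot succ q) (ext_succ sc succ) (\<Delta> x) (\<Delta> y))) \<and>
     (\<forall>x y. teq sc (\<Delta> (dot x y))
              (tprod sc (starA sc prec dot succ q) (ext_dot dot) (\<Delta> x) (\<Delta> y))) \<and>
     (\<forall>x y. teq sc (\<Delta> (prec x y))
              (tprod sc (starA sc prec dot succ q) (ext_prec sc prec) (\<Delta> x) (\<Delta> y)))"

definition primitive :: "('k::field \<Rightarrow> 'h::ab_group_add \<Rightarrow> 'h) \<Rightarrow> ('h \<Rightarrow> ('h,'k) tens) \<Rightarrow> 'h \<Rightarrow> bool" where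
  "primitive sc \<Delta> x \<longleftrightarrow> teq sc (\<Delta> x) [(incl x, unitA), (unitA, incl x)]"

definition tsucc :: "('k::field \<Rightarrow> 'h::ab_group_add \<Rightarrow> 'h) \<Rightarrow> 'k \<Rightarrow> ('h \<Rightarrow> 'h \<Rightarrow> 'h) \<Rightarrow> ('h \<Rightarrow> 'h \<Rightarrow> 'h) \<Rightarrow> 'h \<Rightarrow> 'h \<Rightarrow> 'h" where
  "tsucc sc q dot succ a b = sc q (dot a b) + succ a b"

fun omega_prec :: "('h \<Rightarrow> 'h \<Rightarrow> 'h) \<Rightarrow> 'h list \<Rightarrow> 'h" where
  "omega_prec prec [] = undefined"
| "omega_prec prec [y] = y"
| "omega_prec prec (y # ys) = prec y (omega_prec prec ys)"

definition omega_tsucc :: "('h \<Rightarrow> 'h \<Rightarrow> 'h) \<Rightarrow> 'h list \<Rightarrow> 'h" where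
  "omega_tsucc ts ys = foldl ts (hd ys) (tl ys)"

text \<open>M_{1n}(x; y_1..y_n) = sum_{i=0}^n (-1)^{n-i} (omega_prec(y_1..y_i) ~\<succ> x) \<prec> omega_tsucc(y_{i+1}..y_n),
  with empty omega = 1 and the unit rules 1 ~\<succ> x = x, z \<prec> 1 = z.\<close>
definition M1 :: "('k::field \<Rightarrow> 'h::ab_group_add \<Rightarrow> 'h) \<Rightarrow> 'k \<Rightarrow> ('h \<Rightarrow> 'h \<Rightarrow> 'h) \<Rightarrow> ('h \<Rightarrow> 'h \<Rightarrow> 'h)
    \<Rightarrow> ('h \<Rightarrow> 'h \<Rightarrow> 'h) \<Rightarrow> 'h \<Rightarrow> 'h list \<Rightarrow> 'h" where
  "M1 sc q prec dot succ x ys =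
     (\<Sum>i\<in>{0..length ys}.
        sc ((-1) ^ (length ys - i))
          (let L = (if i = 0 then x else tsucc sc q dot succ (omega_prec prec (take i ys)) x)
           in if i = length ys then L
              else prec L (omega_tsucc (tsucc sc q dot succ) (drop i ys))))"

end

theory Submission
  imports Defs
begin

(*
  Write \<pi> : H_+ \<rightarrow> H for the projection forgetting the unit.

  (1) Bookkeeping: evaluation of tensors, linear and bilinear maps on H_+, and the fact
      that the tensor products in the compatibility axioms respect tensor equality.
  (2) The counit identities give, for primitive x and arbitrary Q, the coproducts of
      x \<prec> Q, Q \<succ> x and Q \<cdot> x up to the image of \<Delta> Q under \<pi> \<otimes> \<pi>.
      In particular x \<cdot> y is primitive for primitive x, y.
  (3) The braces satisfy M(x; ys, a, b) = M(x; ys, a \<prec> b) - M(x; ys, a) \<prec> b.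
  (4) A linear f is cocompatible if \<Delta>(f Q) = f Q \<otimes> 1 + 1 \<otimes> f Q + (\<pi> \<otimes> f\<pi>)(\<Delta> Q).
      Cocompatible maps preserve primitivity; Q \<mapsto> M(x; Q) is cocompatible for primitive x;
      and the step of recursion (3) with a primitive a preserves cocompatibility.  By
      induction every Q \<mapsto> M(x; ys, Q) is cocompatible, whence M(x; zs) is primitive.
  The subspace property is the linearity of \<Delta>.
*)

section \<open>Evaluating tensors on bilinear forms\<close>

definition teval :: "(('h,'k) aug \<Rightarrow> ('h,'k) aug \<Rightarrow> 'k::comm_monoid_add) \<Rightarrow> ('h,'k) tens \<Rightarrow> 'k" where
  "teval \<phi> t = sum_list (map (\<lambda>(a,b). \<phi> a b) t)"

lemma teval_simps[simp]:
  "teval \<phi> [] = 0"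
  "teval \<phi> ((a,b)#t) = \<phi> a b + teval \<phi> t"
  "teval \<phi> (t @ u) = teval \<phi> t + teval \<phi> u"
  by (simp_all add: teval_def)

lemma teval_alt: "teval \<phi> t = sum_list (map (\<lambda>p. \<phi> (fst p) (snd p)) t)"
  by (induction t) auto

lemma teval_concat: "teval \<phi> (concat ts) = sum_list (map (teval \<phi>) ts)"
  by (induction ts) auto

lemma teval_form_linear:
  fixes \<phi> \<psi> :: "('h,'k) aug \<Rightarrow> ('h,'k) aug \<Rightarrow> 'k::comm_ring"
  shows "teval (\<lambda>a b. \<phi> a b + \<psi> a b) t = teval \<phi> t + teval \<psi> t"
    "teval (\<lambda>a b. \<phi> a b - \<psi> a b) t = teval \<phi> t - teval \<psi> t"
    "teval (\<lambda>a b. k * \<phi> a b) t = k * teval \<phi> t"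
  by (induction t) (auto simp: algebra_simps)

lemma teq_teval: "teq sc t u \<longleftrightarrow> (\<forall>\<phi>. bilinear_form sc \<phi> \<longrightarrow> teval \<phi> t = teval \<phi> u)"
  by (simp add: teq_def teval_def)

lemma teq_trans: "teq sc t u \<Longrightarrow> teq sc u v \<Longrightarrow> teq sc t v"
  by (simp add: teq_def)

lemma sum_list_swap:
  "sum_list (map (\<lambda>p. sum_list (map (g p) u)) t) = sum_list (map (\<lambda>r. sum_list (map (\<lambda>p. g p r) t)) u)"
  for g :: "'a \<Rightarrow> 'c \<Rightarrow> 'b::comm_monoid_add"
  by (induction t) (auto simp: sum_list_addf)

locale qtri_bialgebra =
  fixes sc :: "'k::field \<Rightarrow> 'h::ab_group_add \<Rightarrow> 'h"
    and q :: 'k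
    and prec dot succ :: "'h \<Rightarrow> 'h \<Rightarrow> 'h"
    and \<Delta> :: "'h \<Rightarrow> ('h,'k) tens"
  assumes bialg: "q_tridendriform_bialgebra sc q prec dot succ \<Delta>"
begin

lemma tridendriform: "q_tridendriform sc q prec dot succ"
  using bialg by (simp add: q_tridendriform_bialgebra_def)

sublocale vs: vector_space sc
  using tridendriform by (simp add: q_tridendriform_def)

lemma bilinear_ops: "bilinear_op sc prec" "bilinear_op sc dot" "bilinear_op sc succ"
  using tridendriform by (simp_all add: q_tridendriform_def)

lemma prec_prec: "prec (prec a b) c = prec a (prec b c + succ b c + sc q (dot b c))"
  using tridendriform unfolding q_tridendriform_def by (elim conjE) (drule spec)+

lemma prec_succ: "prec (succ a b) c = succ a (prec b c)"
  using tridendriform unfolding q_tridendriform_def by (elim conjE) (drule spec)+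

lemma prec_dot: "prec (dot a b) c = dot a (prec b c)"
  using tridendriform unfolding q_tridendriform_def by (elim conjE) (drule spec)+

lemma bilinear_op_laws:
  assumes "bilinear_op sc f"
  shows "f (x + y) z = f x z + f y z" "f x (y + z) = f x y + f x z"
    "f (sc c x) y = sc c (f x y)" "f x (sc c y) = sc c (f x y)"
    "f 0 y = 0" "f y 0 = 0" "f (- x) y = - f x y" "f y (- x) = - f y x"
    "f (x - y) z = f x z - f y z" "f z (x - y) = f z x - f z y"
proof -
  have add: "f (x + y) z = f x z + f y z" "f z (x + y) = f z x + f z y" for x y z
    using assms by (auto simp: bilinear_op_def)
  show "f x (y + z) = f x y + f x z" "f (sc c x) y = sc c (f x y)" "f x (sc c y) = sc c (f x y)"
    using assms by (auto simp: bilinear_op_def)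
  show zero: "f 0 y = 0" "f y 0 = 0" for y
    using add(1)[of 0 0 y] add(2)[of y 0 0] by simp_all
  show neg: "f (- x) y = - f x y" "f y (- x) = - f y x" for x y
    using add(1)[of "- x" x y] add(2)[of y "- x" x] zero by (simp_all add: eq_neg_iff_add_eq_0)
  show "f (x + y) z = f x z + f y z" by (rule add)
  show "f (x - y) z = f x z - f y z" "f z (x - y) = f z x - f z y"
    using add(1)[of x "- y" z] add(2)[of z x "- y"] by (simp_all add: neg)
qed

lemmas prec_laws[simp] = bilinear_op_laws[OF bilinear_ops(1)]
lemmas dot_laws[simp] = bilinear_op_laws[OF bilinear_ops(2)]
lemmas succ_laws[simp] = bilinear_op_laws[OF bilinear_ops(3)]

lemma scaleA_simps[simp]:
  "scaleA sc k (a + b) = scaleA sc k a + scaleA sc k b"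
  "scaleA sc (k + l) a = scaleA sc k a + scaleA sc l a"
  "scaleA sc k (scaleA sc l a) = scaleA sc (k * l) a"
  "scaleA sc 1 a = a"
  "scaleA sc 0 a = 0"
  "scaleA sc k 0 = 0"
  "fst (scaleA sc k a) = sc k (fst a)"
  "snd (scaleA sc k a) = k * snd a"
  "scaleA sc k (incl h) = incl (sc k h)"
  "scaleA sc k unitA = (0, k)"
  by (auto simp: scaleA_def vs.scale_right_distrib vs.scale_left_distrib algebra_simps
      incl_def unitA_def zero_prod_def)

lemma incl_simps[simp]:
  "incl (u + v) = incl u + (incl v :: ('h,'k) aug)"
  "incl (0::'h) = (0 :: ('h,'k) aug)"
  "fst (incl u :: ('h,'k) aug) = u" "snd (incl u :: ('h,'k) aug) = 0"
  "fst (unitA :: ('h,'k) aug) = 0" "snd (unitA :: ('h,'k) aug) = 1"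
  by (auto simp: incl_def unitA_def zero_prod_def)

lemma aug_decomp: "c = incl (fst c) + scaleA sc (snd c) unitA"
  by (cases c) (simp add: incl_def unitA_def scaleA_def)

definition linA :: "(('h,'k) aug \<Rightarrow> ('h,'k) aug) \<Rightarrow> bool" where
  "linA L \<longleftrightarrow> (\<forall>a b. L (a + b) = L a + L b) \<and> (\<forall>k a. L (scaleA sc k a) = scaleA sc k (L a))"

definition linH :: "(('h,'k) aug \<Rightarrow> 'h) \<Rightarrow> bool" where
  "linH L \<longleftrightarrow> (\<forall>a b. L (a + b) = L a + L b) \<and> (\<forall>k a. L (scaleA sc k a) = sc k (L a))"

definition linK :: "(('h,'k) aug \<Rightarrow> 'k) \<Rightarrow> bool" where
  "linK L \<longleftrightarrow> (\<forall>a b. L (a + b) = L a + L b) \<and> (\<forall>k a. L (scaleA sc k a) = k * (L a))"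

definition linF :: "('h \<Rightarrow> 'h) \<Rightarrow> bool" where
  "linF f \<longleftrightarrow> (\<forall>u v. f (u + v) = f u + f v) \<and> (\<forall>k u. f (sc k u) = sc k (f u))"

lemma linF_laws:
  assumes "linF f"
  shows "f (u + v) = f u + f v" "f (sc k u) = sc k (f u)" "f 0 = 0"
proof -
  show "f (u + v) = f u + f v" "f (sc k u) = sc k (f u)" using assms unfolding linF_def by blast+
  have "f (sc 0 0) = sc 0 (f 0)" using assms unfolding linF_def by blast
  then show "f 0 = 0" by simp
qed

lemma linA_incl: "linH L \<Longrightarrow> linA (\<lambda>a. incl (L a))"
  unfolding linA_def linH_def by (simp del: split_paired_All)

lemma linH_basic:
  "linH fst"
  "bilinear_op sc f \<Longrightarrow> linH (\<lambda>c. f x (fst c))"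
  "bilinear_op sc f \<Longrightarrow> linH (\<lambda>c. f (fst c) x)"
  unfolding linH_def bilinear_op_def by (simp_all del: split_paired_All)

lemma linK_sum_list:
  assumes "linK \<psi>"
  shows "\<psi> (sum_list (map g xs)) = sum_list (map (\<lambda>p. \<psi> (g p)) xs)"
proof -
  have add: "\<psi> (a + b) = \<psi> a + \<psi> b" for a b using assms unfolding linK_def by blast
  have "\<psi> (scaleA sc 0 0) = 0 * \<psi> 0" using assms unfolding linK_def by blast
  then have "\<psi> 0 = 0" by simp
  then show ?thesis by (induction xs) (simp_all add: add)
qed

lemma bilinear_form_laws:
  assumes "bilinear_form sc \<phi>"
  shows "\<phi> (a + a') b = \<phi> a b + \<phi> a' b" "\<phi> a (b + b') = \<phi> a b + \<phi> a b'"
    "\<phi> (scaleA sc k a) b = k * \<phi> a b" "\<phi> a (scaleA sc k b) = k * \<phi> a b"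
    "\<phi> 0 b = 0" "\<phi> a 0 = 0"
    "\<phi> (a - a') b = \<phi> a b - \<phi> a' b" "\<phi> a (b - b') = \<phi> a b - \<phi> a b'"
proof -
  have lin: "\<phi> (a + a') b = \<phi> a b + \<phi> a' b" "\<phi> a (b + b') = \<phi> a b + \<phi> a b'"
    "\<phi> (scaleA sc k a) b = k * \<phi> a b" "\<phi> a (scaleA sc k b) = k * \<phi> a b" for a a' b b' k
    using assms unfolding bilinear_form_def by blast+
  then show "\<phi> (a + a') b = \<phi> a b + \<phi> a' b" "\<phi> a (b + b') = \<phi> a b + \<phi> a b'"
    "\<phi> (scaleA sc k a) b = k * \<phi> a b" "\<phi> a (scaleA sc k b) = k * \<phi> a b"
    by blast+
  show "\<phi> 0 b = 0" "\<phi> a 0 = 0" using lin(3)[of 0 0 b] lin(4)[of a 0 0] by simp_all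
  have minus: "a - a' = a + scaleA sc (-1) a'" for a a' :: "('h,'k) aug"
    by (cases a, cases a') (simp add: scaleA_def)
  show "\<phi> (a - a') b = \<phi> a b - \<phi> a' b" "\<phi> a (b - b') = \<phi> a b - \<phi> a b'"
    by (simp_all only: minus lin mult_minus1, simp_all)
qed

lemma bilinear_form_incl:
  assumes "bilinear_form sc \<phi>"
  shows "\<phi> (incl (u + v)) w = \<phi> (incl u) w + \<phi> (incl v) w"
    "\<phi> w (incl (u + v)) = \<phi> w (incl u) + \<phi> w (incl v)"
    "\<phi> (incl (sc k u)) w = k * \<phi> (incl u) w"
    "\<phi> w (incl (sc k u)) = k * \<phi> w (incl u)"
    "\<phi> (incl (u - v)) w = \<phi> (incl u) w - \<phi> (incl v) w"
    "\<phi> w (incl (u - v)) = \<phi> w (incl u) - \<phi> w (incl v)"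
    "\<phi> (incl 0) w = 0" "\<phi> w (incl 0) = 0"
proof -
  note L = bilinear_form_laws[OF assms]
  have "incl (u - v) = incl u - (incl v :: ('h,'k) aug)" by (simp add: incl_def)
  then show "\<phi> (incl (u - v)) w = \<phi> (incl u) w - \<phi> (incl v) w"
      "\<phi> w (incl (u - v)) = \<phi> w (incl u) - \<phi> w (incl v)"
    by (simp_all only: L)
  show "\<phi> (incl (sc k u)) w = k * \<phi> (incl u) w" "\<phi> w (incl (sc k u)) = k * \<phi> w (incl u)"
    by (simp_all only: scaleA_simps(9)[symmetric] L)
  show "\<phi> (incl (u + v)) w = \<phi> (incl u) w + \<phi> (incl v) w"
    "\<phi> w (incl (u + v)) = \<phi> w (incl u) + \<phi> w (incl v)"
    "\<phi> (incl 0) w = 0" "\<phi> w (incl 0) = 0"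
    by (simp_all only: incl_simps L)
qed

lemma bilinear_form_sum:
  assumes "\<And>p. p \<in> set u \<Longrightarrow> bilinear_form sc (G p)"
  shows "bilinear_form sc (\<lambda>a b. sum_list (map (\<lambda>p. G p a b) u))"
  using assms
proof (induction u)
  case Nil
  then show ?case by (simp add: bilinear_form_def)
next
  case (Cons p u)
  then have "bilinear_form sc (G p)" "bilinear_form sc (\<lambda>a b. sum_list (map (\<lambda>p. G p a b) u))"
    by simp_all
  then show ?case unfolding bilinear_form_def by (simp add: algebra_simps del: split_paired_All)
qed

lemma bilinear_form_add:
  assumes "bilinear_form sc \<phi>" "bilinear_form sc \<psi>"
  shows "bilinear_form sc (\<lambda>a b. \<phi> a b + \<psi> a b)"
  using assms unfolding bilinear_form_def by (simp add: algebra_simps del: split_paired_All)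

lemma bilinear_form_comp:
  assumes "bilinear_form sc \<phi>" "linA L1" "linA L2"
  shows "bilinear_form sc (\<lambda>a b. \<phi> (L1 a) (L2 b))"
  using assms unfolding bilinear_form_def linA_def by (simp del: split_paired_All)

lemma bilinear_form_counit_left:
  assumes "bilinear_form sc \<phi>" "linA L"
  shows "bilinear_form sc (\<lambda>a b. \<phi> (scaleA sc (snd b * s) (L a)) w)"
  using assms unfolding bilinear_form_def linA_def by (simp add: algebra_simps del: split_paired_All)

lemma bilinear_form_counit_right:
  assumes "bilinear_form sc \<phi>" "linA L"
  shows "bilinear_form sc (\<lambda>c d. \<phi> (scaleA sc (s * snd d) (L c)) w)"
  using assms unfolding bilinear_form_def linA_def by (simp add: algebra_simps del: split_paired_All)

lemma linK_counit: "linK (\<lambda>c. snd c * k)"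
  unfolding linK_def by (simp add: algebra_simps)

lemma linK_of_form:
  assumes "bilinear_form sc \<phi>"
  shows "linK (\<lambda>c. \<phi> c w)"
    "linA L \<Longrightarrow> linK (\<lambda>c. \<phi> (L c) w)" "linA L \<Longrightarrow> linK (\<lambda>c. \<phi> w (L c))"
  using assms unfolding linK_def linA_def bilinear_form_def
  by (simp_all del: split_paired_All)

lemma linK_incl:
  assumes "bilinear_form sc \<phi>" "linH L"
  shows "linK (\<lambda>c. \<phi> (incl (L c)) w)"
  by (rule linK_of_form(2)[OF assms(1) linA_incl[OF assms(2)]])

section \<open>Tensor products respect tensor equality\<close>

abbreviation star :: "('h,'k) aug \<Rightarrow> ('h,'k) aug \<Rightarrow> ('h,'k) aug" where
  "star \<equiv> starA sc prec dot succ q"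

lemma star_linear: "linA (\<lambda>a. star a c)" "linA (\<lambda>c. star a c)"
  unfolding linA_def starA_def
  by (auto simp: vs.scale_right_distrib vs.scale_left_distrib algebra_simps scaleA_def)

lemma star_unit[simp]: "star unitA c = c" "star c unitA = c"
  by (auto simp: starA_def unitA_def intro: prod_eqI)

lemma ext_linear:
  "linH (\<lambda>a. ext_succ sc succ a c)" "linH (\<lambda>c. ext_succ sc succ a c)"
  "linH (\<lambda>a. ext_dot dot a c)" "linH (\<lambda>c. ext_dot dot a c)"
  "linH (\<lambda>a. ext_prec sc prec a c)" "linH (\<lambda>c. ext_prec sc prec a c)"
  unfolding linH_def ext_succ_def ext_dot_def ext_prec_def
  by (auto simp: vs.scale_right_distrib vs.scale_left_distrib algebra_simps)

lemma ext_simps[simp]: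
  "ext_prec sc prec unitA d = sc (snd d) 0"
  "ext_dot dot unitA d = 0" "ext_dot dot d unitA = 0"
  "ext_prec sc prec d unitA = fst d"
  "ext_succ sc succ d unitA = 0"
  "ext_succ sc succ unitA d = fst d"
  "ext_prec sc prec (incl a) d = prec a (fst d) + sc (snd d) a"
  "ext_succ sc succ d (incl a) = succ (fst d) a + sc (snd d) a"
  "ext_dot dot (incl a) d = dot a (fst d)"
  "ext_dot dot d (incl a) = dot (fst d) a"
  by (simp_all add: ext_prec_def ext_dot_def ext_succ_def unitA_def incl_def)

definition tprod_term :: "(('h,'k) aug \<Rightarrow> ('h,'k) aug \<Rightarrow> 'k) \<Rightarrow> (('h,'k) aug \<Rightarrow> ('h,'k) aug \<Rightarrow> 'h)
    \<Rightarrow> ('h,'k) aug \<Rightarrow> ('h,'k) aug \<Rightarrow> ('h,'k) aug \<Rightarrow> ('h,'k) aug \<Rightarrow> 'k" where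
  "tprod_term \<phi> E a b c d =
     \<phi> (star a c) (incl (E b d)) + \<phi> (scaleA sc (snd b * snd d) (incl (E a c))) unitA"

lemma teval_tprod: "teval \<phi> (tprod sc star E t u) =
   sum_list (map (\<lambda>p. sum_list (map (\<lambda>r. tprod_term \<phi> E (fst p) (snd p) (fst r) (snd r)) u)) t)"
  unfolding tprod_def by (simp add: o_def case_prod_beta tprod_term_def teval_concat)

lemma tprod_term_bilinear:
  assumes "bilinear_form sc \<phi>" "\<And>c. linH (\<lambda>a. E a c)" "\<And>a. linH (\<lambda>c. E a c)"
  shows "bilinear_form sc (\<lambda>a b. tprod_term \<phi> E a b c d)"
    "bilinear_form sc (\<lambda>c d. tprod_term \<phi> E a b c d)"
  unfolding tprod_term_def
  by (rule bilinear_form_add[OF bilinear_form_comp[OF assms(1) star_linear(1) linA_incl[OF assms(2)]]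
        bilinear_form_counit_left[OF assms(1) linA_incl[OF assms(2)]]],
      rule bilinear_form_add[OF bilinear_form_comp[OF assms(1) star_linear(2) linA_incl[OF assms(3)]]
        bilinear_form_counit_right[OF assms(1) linA_incl[OF assms(3)]]])

lemma tprod_teq_left:
  assumes "teq sc t t'" "\<And>c. linH (\<lambda>a. E a c)" "\<And>a. linH (\<lambda>c. E a c)"
  shows "teq sc (tprod sc star E t u) (tprod sc star E t' u)"
  unfolding teq_teval
proof (intro allI impI)
  fix \<phi> assume bf: "bilinear_form sc \<phi>"
  let ?\<psi> = "\<lambda>a b. sum_list (map (\<lambda>r. tprod_term \<phi> E a b (fst r) (snd r)) u)"
  have "bilinear_form sc ?\<psi>"
    by (rule bilinear_form_sum) (rule tprod_term_bilinear(1)[OF bf assms(2,3)])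
  then have "teval ?\<psi> t = teval ?\<psi> t'" using assms(1) unfolding teq_teval by blast
  then show "teval \<phi> (tprod sc star E t u) = teval \<phi> (tprod sc star E t' u)"
    unfolding teval_tprod by (simp add: teval_alt)
qed

lemma tprod_teq_right:
  assumes "teq sc u u'" "\<And>c. linH (\<lambda>a. E a c)" "\<And>a. linH (\<lambda>c. E a c)"
  shows "teq sc (tprod sc star E t u) (tprod sc star E t u')"
  unfolding teq_teval
proof (intro allI impI)
  fix \<phi> assume bf: "bilinear_form sc \<phi>"
  let ?\<psi> = "\<lambda>c d. sum_list (map (\<lambda>p. tprod_term \<phi> E (fst p) (snd p) c d) t)"
  have "bilinear_form sc ?\<psi>"
    by (rule bilinear_form_sum) (rule tprod_term_bilinear(2)[OF bf assms(2,3)])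
  then have "teval ?\<psi> u = teval ?\<psi> u'" using assms(1) unfolding teq_teval by blast
  then show "teval \<phi> (tprod sc star E t u) = teval \<phi> (tprod sc star E t u')"
    unfolding teval_tprod by (simp add: teval_alt sum_list_swap[where u=u] sum_list_swap[where u=u'])
qed

lemma \<Delta>_add: "teq sc (\<Delta> (x + y)) (\<Delta> x @ \<Delta> y)"
  and \<Delta>_scale: "teq sc (\<Delta> (sc c x)) (tscale sc c (\<Delta> x))"
  and \<Delta>_succ: "teq sc (\<Delta> (succ x y)) (tprod sc star (ext_succ sc succ) (\<Delta> x) (\<Delta> y))"
  and \<Delta>_dot: "teq sc (\<Delta> (dot x y)) (tprod sc star (ext_dot dot) (\<Delta> x) (\<Delta> y))"
  and \<Delta>_prec: "teq sc (\<Delta> (prec x y)) (tprod sc star (ext_prec sc prec) (\<Delta> x) (\<Delta> y))"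
  and counit_left: "sum_list (map (\<lambda>(a,b). scaleA sc (eps a) b) (\<Delta> x)) = incl x"
  and counit_right: "sum_list (map (\<lambda>(a,b). scaleA sc (eps b) a) (\<Delta> x)) = incl x"
  using bialg by (simp_all add: q_tridendriform_bialgebra_def)

lemma teval_tscale: "bilinear_form sc \<phi> \<Longrightarrow> teval \<phi> (tscale sc c t) = c * teval \<phi> t"
  by (induction t) (auto simp: tscale_def bilinear_form_laws algebra_simps)

lemma teval_\<Delta>_linear:
  assumes bf: "bilinear_form sc \<phi>"
  shows "teval \<phi> (\<Delta> (u + v)) = teval \<phi> (\<Delta> u) + teval \<phi> (\<Delta> v)"
    "teval \<phi> (\<Delta> (sc k u)) = k * teval \<phi> (\<Delta> u)"
    "teval \<phi> (\<Delta> (u - v)) = teval \<phi> (\<Delta> u) - teval \<phi> (\<Delta> v)"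
proof -
  show add: "teval \<phi> (\<Delta> (u + v)) = teval \<phi> (\<Delta> u) + teval \<phi> (\<Delta> v)" for u v
    using \<Delta>_add[of u v] bf unfolding teq_teval by simp
  show scale: "teval \<phi> (\<Delta> (sc k u)) = k * teval \<phi> (\<Delta> u)" for k u
    using \<Delta>_scale[of k u] bf unfolding teq_teval by (simp add: teval_tscale)
  have "u - v = u + sc (-1) v" by simp
  then show "teval \<phi> (\<Delta> (u - v)) = teval \<phi> (\<Delta> u) - teval \<phi> (\<Delta> v)"
    by (simp only: add scale) simp
qed

abbreviation prim_tensor :: "'h \<Rightarrow> ('h,'k) tens" where
  "prim_tensor x \<equiv> [(incl x, unitA), (unitA, incl x)]"

lemma counit_right_eval:
  assumes "linK \<psi>"
  shows "sum_list (map (\<lambda>p. snd (snd p) * \<psi> (fst p)) (\<Delta> Q)) = \<psi> (incl Q)"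
proof -
  have scale: "\<psi> (scaleA sc k a) = k * \<psi> a" for k a using assms unfolding linK_def by blast
  have "\<psi> (incl Q) = \<psi> (sum_list (map (\<lambda>p. scaleA sc (snd (snd p)) (fst p)) (\<Delta> Q)))"
    using counit_right[of Q, unfolded split_def eps_def] by simp
  then show ?thesis by (simp add: linK_sum_list[OF assms] scale)
qed

lemma counit_left_eval:
  assumes "linK \<psi>"
  shows "sum_list (map (\<lambda>p. snd (fst p) * \<psi> (snd p)) (\<Delta> Q)) = \<psi> (incl Q)"
proof -
  have scale: "\<psi> (scaleA sc k a) = k * \<psi> a" for k a using assms unfolding linK_def by blast
  have "\<psi> (incl Q) = \<psi> (sum_list (map (\<lambda>p. scaleA sc (snd (fst p)) (snd p)) (\<Delta> Q)))"
    using counit_left[of Q, unfolded split_def eps_def] by simp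
  then show ?thesis by (simp add: linK_sum_list[OF assms] scale)
qed

text \<open>Splitting off the unit part of the left tensor factor: by the left counit identity,
  replacing Q' by \<pi>(Q') in sum \<phi>(Q', W Q'') costs exactly \<phi>(1, W Q).\<close>
lemma split_unit_left:
  assumes bf: "bilinear_form sc \<phi>" and W: "linA W"
  shows "sum_list (map (\<lambda>p. \<phi> (fst p) (W (snd p))) (\<Delta> Q)) =
         sum_list (map (\<lambda>p. \<phi> (incl (fst (fst p))) (W (snd p))) (\<Delta> Q)) + \<phi> unitA (W (incl Q))"
proof -
  have decomp: "\<phi> c w = \<phi> (incl (fst c)) w + snd c * \<phi> unitA w" for c w
    by (subst aug_decomp[of c]) (simp only: bilinear_form_laws[OF bf])
  have "sum_list (map (\<lambda>p. \<phi> (fst p) (W (snd p))) (\<Delta> Q)) =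
    sum_list (map (\<lambda>p. \<phi> (incl (fst (fst p))) (W (snd p)) + snd (fst p) * \<phi> unitA (W (snd p))) (\<Delta> Q))"
    by (simp only: decomp[of "fst _"])
  then show ?thesis
    by (simp only: sum_list_addf counit_left_eval[OF linK_of_form(3)[OF bf W]])
qed

section \<open>Coproducts of products with a primitive element\<close>

definition red_map :: "('h \<Rightarrow> 'h) \<Rightarrow> ('h,'k) tens \<Rightarrow> ('h,'k) tens" where
  "red_map f t = map (\<lambda>p. (incl (fst (fst p)), incl (f (fst (snd p))))) t"

lemma teval_red_map:
  "teval \<phi> (red_map f t) = teval (\<lambda>c d. \<phi> (incl (fst c)) (incl (f (fst d)))) t"
  by (simp add: red_map_def teval_alt o_def)

lemma red_map_teq:
  assumes "linF f" "teq sc t t'"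
  shows "teq sc (red_map f t) (red_map f t')"
  unfolding teq_teval
proof (intro allI impI)
  fix \<phi> assume bf: "bilinear_form sc \<phi>"
  have "linH (\<lambda>d. f (fst d))" using assms(1) unfolding linH_def linF_def by (simp del: split_paired_All)
  then have "bilinear_form sc (\<lambda>c d. \<phi> (incl (fst c)) (incl (f (fst d))))"
    by (rule bilinear_form_comp[OF bf linA_incl[OF linH_basic(1)] linA_incl])
  then show "teval \<phi> (red_map f t) = teval \<phi> (red_map f t')"
    using assms(2) unfolding teq_teval teval_red_map by blast
qed

lemma red_map_primitive:
  assumes "primitive sc \<Delta> Q" "linF f" "bilinear_form sc \<phi>"
  shows "teval \<phi> (red_map f (\<Delta> Q)) = 0"
proof -
  have "teq sc (red_map f (\<Delta> Q)) (red_map f (prim_tensor Q))"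
    by (rule red_map_teq[OF assms(2) assms(1)[unfolded primitive_def]])
  then have "teval \<phi> (red_map f (\<Delta> Q)) = teval \<phi> (red_map f (prim_tensor Q))"
    using assms(3) unfolding teq_teval by blast
  also have "\<dots> = 0"
    by (simp add: red_map_def linF_laws[OF assms(2)] bilinear_form_incl[OF assms(3)]
        bilinear_form_laws[OF assms(3)])
  finally show ?thesis .
qed

lemma coprod_prec_primitive:
  assumes px: "primitive sc \<Delta> x" and bf: "bilinear_form sc \<phi>"
  shows "teval \<phi> (\<Delta> (prec x Q)) = \<phi> (incl (prec x Q)) unitA + \<phi> unitA (incl (prec x Q))
     + teval \<phi> (red_map (prec x) (\<Delta> Q)) + \<phi> (incl Q) (incl x)"
proof -
  have "teq sc (\<Delta> (prec x Q)) (tprod sc star (ext_prec sc prec) (prim_tensor x) (\<Delta> Q))"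
    by (rule teq_trans[OF \<Delta>_prec tprod_teq_left[OF px[unfolded primitive_def] ext_linear(5,6)]])
  then have "teval \<phi> (\<Delta> (prec x Q)) =
               teval \<phi> (tprod sc star (ext_prec sc prec) (prim_tensor x) (\<Delta> Q))"
    using bf unfolding teq_teval by blast
  also have "\<dots> =
     sum_list (map (\<lambda>p. snd (snd p) * \<phi> (incl (prec x (fst (fst p)))) unitA) (\<Delta> Q))
   + sum_list (map (\<lambda>p. snd (snd p) * (snd (fst p) * \<phi> (incl x) unitA)) (\<Delta> Q))
   + sum_list (map (\<lambda>p. \<phi> (fst p) (incl (prec x (fst (snd p))))) (\<Delta> Q))
   + sum_list (map (\<lambda>p. snd (snd p) * \<phi> (fst p) (incl x)) (\<Delta> Q))"
    by (simp add: teval_tprod tprod_term_def bilinear_form_laws[OF bf] bilinear_form_incl[OF bf]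
        sum_list_addf algebra_simps)
  finally show ?thesis unfolding teval_red_map
    by (simp add: teval_alt counit_right_eval[OF linK_incl[OF bf linH_basic(2)[OF bilinear_ops(1)]]]
        counit_right_eval[OF linK_counit] counit_right_eval[OF linK_of_form(1)[OF bf]]
        split_unit_left[OF bf linA_incl[OF linH_basic(2)[OF bilinear_ops(1)]]])
qed

lemma coprod_succ_primitive:
  assumes px: "primitive sc \<Delta> x" and bf: "bilinear_form sc \<phi>"
  shows "teval \<phi> (\<Delta> (succ Q x)) = \<phi> (incl (succ Q x)) unitA + \<phi> unitA (incl (succ Q x))
     + teval \<phi> (red_map (\<lambda>u. succ u x) (\<Delta> Q)) + \<phi> (incl Q) (incl x)"
proof -
  have "teq sc (\<Delta> (succ Q x)) (tprod sc star (ext_succ sc succ) (\<Delta> Q) (prim_tensor x))"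
    by (rule teq_trans[OF \<Delta>_succ tprod_teq_right[OF px[unfolded primitive_def] ext_linear(1,2)]])
  then have "teval \<phi> (\<Delta> (succ Q x)) =
               teval \<phi> (tprod sc star (ext_succ sc succ) (\<Delta> Q) (prim_tensor x))"
    using bf unfolding teq_teval by blast
  also have "\<dots> =
     sum_list (map (\<lambda>p. snd (snd p) * \<phi> (incl (succ (fst (fst p)) x)) unitA) (\<Delta> Q))
   + sum_list (map (\<lambda>p. snd (snd p) * (snd (fst p) * \<phi> (incl x) unitA)) (\<Delta> Q))
   + sum_list (map (\<lambda>p. \<phi> (fst p) (incl (succ (fst (snd p)) x))) (\<Delta> Q))
   + sum_list (map (\<lambda>p. snd (snd p) * \<phi> (fst p) (incl x)) (\<Delta> Q))"
    by (simp add: teval_tprod tprod_term_def bilinear_form_laws[OF bf] bilinear_form_incl[OF bf]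
        sum_list_addf algebra_simps)
  finally show ?thesis unfolding teval_red_map
    by (simp add: teval_alt counit_right_eval[OF linK_incl[OF bf linH_basic(3)[OF bilinear_ops(3)]]]
        counit_right_eval[OF linK_counit] counit_right_eval[OF linK_of_form(1)[OF bf]]
        split_unit_left[OF bf linA_incl[OF linH_basic(3)[OF bilinear_ops(3)]]])
qed

lemma coprod_dot_primitive:
  assumes px: "primitive sc \<Delta> x" and bf: "bilinear_form sc \<phi>"
  shows "teval \<phi> (\<Delta> (dot Q x)) = \<phi> (incl (dot Q x)) unitA + \<phi> unitA (incl (dot Q x))
     + teval \<phi> (red_map (\<lambda>u. dot u x) (\<Delta> Q))"
proof -
  have "teq sc (\<Delta> (dot Q x)) (tprod sc star (ext_dot dot) (\<Delta> Q) (prim_tensor x))"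
    by (rule teq_trans[OF \<Delta>_dot tprod_teq_right[OF px[unfolded primitive_def] ext_linear(3,4)]])
  then have "teval \<phi> (\<Delta> (dot Q x)) = teval \<phi> (tprod sc star (ext_dot dot) (\<Delta> Q) (prim_tensor x))"
    using bf unfolding teq_teval by blast
  also have "\<dots> =
     sum_list (map (\<lambda>p. snd (snd p) * \<phi> (incl (dot (fst (fst p)) x)) unitA) (\<Delta> Q))
   + sum_list (map (\<lambda>p. \<phi> (fst p) (incl (dot (fst (snd p)) x))) (\<Delta> Q))"
    by (simp add: teval_tprod tprod_term_def bilinear_form_laws[OF bf] bilinear_form_incl[OF bf]
        sum_list_addf algebra_simps)
  finally show ?thesis unfolding teval_red_map
    by (simp add: teval_alt counit_right_eval[OF linK_incl[OF bf linH_basic(3)[OF bilinear_ops(2)]]]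
        split_unit_left[OF bf linA_incl[OF linH_basic(3)[OF bilinear_ops(2)]]])
qed

lemma red_map_coprod_prec:
  assumes pa: "primitive sc \<Delta> a" and bf: "bilinear_form sc \<phi>" and lf: "linF f"
  shows "teval \<phi> (red_map f (\<Delta> (prec a Q))) =
       teval \<phi> (red_map (\<lambda>u. f (prec a u)) (\<Delta> Q)) + \<phi> (incl Q) (incl (f a))"
proof -
  have "teq sc (\<Delta> (prec a Q)) (tprod sc star (ext_prec sc prec) (prim_tensor a) (\<Delta> Q))"
    by (rule teq_trans[OF \<Delta>_prec tprod_teq_left[OF pa[unfolded primitive_def] ext_linear(5,6)]])
  then have "teval \<phi> (red_map f (\<Delta> (prec a Q))) =
               teval \<phi> (red_map f (tprod sc star (ext_prec sc prec) (prim_tensor a) (\<Delta> Q)))"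
    using bf red_map_teq[OF lf] unfolding teq_teval by blast
  also have "\<dots> =
     sum_list (map (\<lambda>p. \<phi> (incl (fst (fst p))) (incl (f (prec a (fst (snd p)))))) (\<Delta> Q))
   + sum_list (map (\<lambda>p. snd (snd p) * \<phi> (incl (fst (fst p))) (incl (f a))) (\<Delta> Q))"
    unfolding teval_red_map
    by (simp add: teval_tprod tprod_term_def bilinear_form_laws[OF bf]
        bilinear_form_incl[OF bf] sum_list_addf algebra_simps linF_laws[OF lf])
  finally show ?thesis unfolding teval_red_map
    by (simp add: teval_alt counit_right_eval[OF linK_incl[OF bf linH_basic(1)]])
qed

section \<open>The brace recursion\<close>

abbreviation tsc :: "'h \<Rightarrow> 'h \<Rightarrow> 'h" where "tsc \<equiv> tsucc sc q dot succ"
abbreviation M :: "'h \<Rightarrow> 'h list \<Rightarrow> 'h" where "M \<equiv> M1 sc q prec dot succ"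

definition brace_term :: "'h \<Rightarrow> 'h list \<Rightarrow> nat \<Rightarrow> 'h" where
  "brace_term x zs i = (let L = (if i = 0 then x else tsc (omega_prec prec (take i zs)) x)
           in if i = length zs then L
              else prec L (omega_tsucc tsc (drop i zs)))"

lemma M_brace_term: "M x zs = (\<Sum>i\<le>length zs. sc ((-1) ^ (length zs - i)) (brace_term x zs i))"
  unfolding M1_def brace_term_def atLeast0AtMost ..

lemma M_nil: "M x [] = x"
  by (simp add: M_brace_term brace_term_def)

lemma M_single: "M x [Q] = sc q (dot Q x) + succ Q x - prec x Q"
  by (simp add: M_brace_term brace_term_def omega_tsucc_def tsucc_def)

lemma omega_tsucc_snoc: "omega_tsucc tsc (d @ [a, b]) = tsc (omega_tsucc tsc (d @ [a])) b"
  by (cases d) (simp_all add: omega_tsucc_def)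

lemma omega_tsucc_prec: "omega_tsucc tsc (d @ [prec a b]) = prec (omega_tsucc tsc (d @ [a])) b"
proof -
  have "tsc w (prec a b) = prec (tsc w a) b" for w
    by (simp add: tsucc_def prec_succ prec_dot)
  then show ?thesis by (cases d) (simp_all add: omega_tsucc_def)
qed

lemma omega_prec_snoc: "omega_prec prec (ys @ [a, b]) = omega_prec prec (ys @ [prec a b])"
proof (induction ys)
  case (Cons y ys)
  then show ?case by (cases ys) simp_all
qed simp

text \<open>Summands with i \<le> length ys: axiom (1) turns L \<prec> (W ~\<succ> b) into
  (L \<prec> W) \<prec> b - L \<prec> (W \<prec> b).\<close>
lemma brace_term_low:
  assumes "i \<le> length ys"
  shows "brace_term x (ys @ [a, b]) i = prec (brace_term x (ys @ [a]) i) b - brace_term x (ys @ [prec a b]) i"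
proof -
  define L where "L = (if i = 0 then x else tsc (omega_prec prec (take i ys)) x)"
  define W where "W = omega_tsucc tsc (drop i ys @ [a])"
  have "brace_term x (ys @ [a, b]) i = prec L (tsc W b)"
    "brace_term x (ys @ [a]) i = prec L W"
    "brace_term x (ys @ [prec a b]) i = prec L (prec W b)"
    using assms unfolding brace_term_def L_def W_def Let_def
    by (simp_all add: omega_tsucc_snoc omega_tsucc_prec)
  then show ?thesis by (simp add: prec_prec tsucc_def)
qed

lemma prec_sum: "prec (sum g A) b = (\<Sum>i\<in>A. prec (g i) b)"
proof (induction A rule: infinite_finite_induct)
  case (insert x F)
  then show ?case by (simp only: sum.insert[OF insert(1,2)] prec_laws(1) insert(3))
qed simp_all

lemma M_snoc_recursion: "M x (ys @ [a, b]) = M x (ys @ [prec a b]) - prec (M x (ys @ [a])) b"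
proof -
  let ?n = "length ys" and ?s = "\<lambda>m i. sc ((-1::'k) ^ (m - i))"
  have low: "?s (Suc (Suc ?n)) i (brace_term x (ys @ [a, b]) i) =
     ?s (Suc ?n) i (brace_term x (ys @ [prec a b]) i) - ?s (Suc ?n) i (prec (brace_term x (ys @ [a]) i) b)"
    if "i \<in> {..?n}" for i
  proof -
    from that have "i \<le> ?n" by simp
    moreover from that have "Suc (Suc ?n) - i = Suc (Suc ?n - i)" by simp
    ultimately show ?thesis using brace_term_low[of i ys x a b]
      by (simp add: vs.scale_right_diff_distrib)
  qed
  have last1: "brace_term x (ys @ [a, b]) (Suc ?n) = prec (brace_term x (ys @ [a]) (Suc ?n)) b"
    by (simp add: brace_term_def omega_tsucc_def)
  have last2: "brace_term x (ys @ [a, b]) (Suc (Suc ?n)) = brace_term x (ys @ [prec a b]) (Suc ?n)"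
    by (simp add: brace_term_def omega_prec_snoc[simplified])
  have "M x (ys @ [a, b]) = (\<Sum>i\<le>?n. ?s (Suc (Suc ?n)) i (brace_term x (ys @ [a, b]) i))
      + sc (-1) (brace_term x (ys @ [a, b]) (Suc ?n)) + brace_term x (ys @ [a, b]) (Suc (Suc ?n))"
    by (simp add: M_brace_term)
  also have "\<dots> = (\<Sum>i\<le>?n. ?s (Suc ?n) i (brace_term x (ys @ [prec a b]) i))
     - (\<Sum>i\<le>?n. ?s (Suc ?n) i (prec (brace_term x (ys @ [a]) i) b))
     - prec (brace_term x (ys @ [a]) (Suc ?n)) b + brace_term x (ys @ [prec a b]) (Suc ?n)"
    by (simp only: sum.cong[OF refl low] sum_subtractf last1 last2) simp
  also have "\<dots> = M x (ys @ [prec a b]) - prec (M x (ys @ [a])) b"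
    by (simp add: M_brace_term prec_sum)
  finally show ?thesis .
qed

section \<open>Cocompatible maps\<close>

definition cocompatible :: "('h \<Rightarrow> 'h) \<Rightarrow> bool" where
  "cocompatible f \<longleftrightarrow> linF f \<and>
     (\<forall>Q \<phi>. bilinear_form sc \<phi> \<longrightarrow>
        teval \<phi> (\<Delta> (f Q)) = \<phi> (incl (f Q)) unitA + \<phi> unitA (incl (f Q)) + teval \<phi> (red_map f (\<Delta> Q)))"

text \<open>Cocompatible maps preserve primitivity, since the reduced part of a primitive vanishes.\<close>
lemma cocompatible_primitive:
  assumes "cocompatible f" "primitive sc \<Delta> Q"
  shows "primitive sc \<Delta> (f Q)"
  unfolding primitive_def teq_teval
proof (intro allI impI)
  fix \<phi> assume bf: "bilinear_form sc \<phi>"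
  have "linF f" using assms(1) unfolding cocompatible_def by blast
  then show "teval \<phi> (\<Delta> (f Q)) = teval \<phi> (prim_tensor (f Q))"
    using assms(1) bf red_map_primitive[OF assms(2) _ bf] unfolding cocompatible_def by simp
qed

text \<open>The first brace Q \<mapsto> M(x; Q) = q Q \<cdot> x + Q \<succ> x - x \<prec> Q: the two cross terms Q \<otimes> x cancel.\<close>
lemma cocompatible_M_single:
  assumes px: "primitive sc \<Delta> x"
  shows "cocompatible (\<lambda>Q. sc q (dot Q x) + succ Q x - prec x Q)"
proof -
  have "teval \<phi> (\<Delta> (sc q (dot Q x) + succ Q x - prec x Q)) =
        \<phi> (incl (sc q (dot Q x) + succ Q x - prec x Q)) unitA
        + \<phi> unitA (incl (sc q (dot Q x) + succ Q x - prec x Q))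
        + teval \<phi> (red_map (\<lambda>Q. sc q (dot Q x) + succ Q x - prec x Q) (\<Delta> Q))"
    if bf: "bilinear_form sc \<phi>" for Q \<phi>
    by (simp add: teval_\<Delta>_linear[OF bf] coprod_prec_primitive[OF px bf] coprod_succ_primitive[OF px bf]
        coprod_dot_primitive[OF px bf] teval_red_map bilinear_form_incl[OF bf]
        bilinear_form_laws[OF bf] teval_form_linear algebra_simps)
  moreover have "linF (\<lambda>Q. sc q (dot Q x) + succ Q x - prec x Q)"
    unfolding linF_def by (simp add: algebra_simps vs.scale_right_distrib)
  ultimately show ?thesis unfolding cocompatible_def by blast
qed

text \<open>The recursion step: with f cocompatible and a primitive, so is Q \<mapsto> f(a \<prec> Q) - f(a) \<prec> Q;
  the cross term Q \<otimes> f(a) coming from \<Delta>(a \<prec> Q) cancels the one of \<Delta>(f(a) \<prec> Q).\<close>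
lemma cocompatible_step:
  assumes cf: "cocompatible f" and pa: "primitive sc \<Delta> a"
  shows "cocompatible (\<lambda>Q. f (prec a Q) - prec (f a) Q)"
proof -
  have lf: "linF f" using cf unfolding cocompatible_def by blast
  have pfa: "primitive sc \<Delta> (f a)" by (rule cocompatible_primitive[OF cf pa])
  have "teval \<phi> (\<Delta> (f (prec a Q) - prec (f a) Q)) =
        \<phi> (incl (f (prec a Q) - prec (f a) Q)) unitA + \<phi> unitA (incl (f (prec a Q) - prec (f a) Q))
        + teval \<phi> (red_map (\<lambda>Q. f (prec a Q) - prec (f a) Q) (\<Delta> Q))"
    if bf: "bilinear_form sc \<phi>" for Q \<phi>
  proof -
    have f_coprod: "teval \<phi> (\<Delta> (f u)) = \<phi> (incl (f u)) unitA + \<phi> unitA (incl (f u))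
                      + teval \<phi> (red_map f (\<Delta> u))" for u
      using cf bf unfolding cocompatible_def by blast
    show ?thesis
      using red_map_coprod_prec[OF pa bf lf, of Q]
      by (simp add: teval_\<Delta>_linear[OF bf] f_coprod
          coprod_prec_primitive[OF pfa bf] teval_red_map bilinear_form_incl[OF bf]
          bilinear_form_laws[OF bf] teval_form_linear algebra_simps)
  qed
  moreover have "linF (\<lambda>Q. f (prec a Q) - prec (f a) Q)"
    unfolding linF_def by (simp add: linF_laws[OF lf] algebra_simps vs.scale_right_diff_distrib)
  ultimately show ?thesis unfolding cocompatible_def by blast
qed

lemma cocompatible_M:
  assumes "primitive sc \<Delta> x" "\<forall>z\<in>set ys. primitive sc \<Delta> z"
  shows "cocompatible (\<lambda>Q. M x (ys @ [Q]))"
  using assms(2)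
proof (induction ys rule: rev_induct)
  case Nil
  then show ?case using cocompatible_M_single[OF assms(1)] by (simp add: M_single)
next
  case (snoc a ys)
  have "(\<lambda>Q. M x ((ys @ [a]) @ [Q])) = (\<lambda>Q. M x (ys @ [prec a Q]) - prec (M x (ys @ [a])) Q)"
    by (simp add: M_snoc_recursion)
  then show ?case using cocompatible_step[of "\<lambda>Q. M x (ys @ [Q])" a] snoc by simp
qed

theorem M_primitive:
  assumes "primitive sc \<Delta> x" "\<forall>z\<in>set zs. primitive sc \<Delta> z"
  shows "primitive sc \<Delta> (M x zs)"
proof (cases zs rule: rev_exhaust)
  case Nil
  then show ?thesis using assms(1) by (simp add: M_nil)
next
  case (snoc ys Q)
  then show ?thesis using cocompatible_primitive[OF cocompatible_M[OF assms(1)]] assms(2) by simp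
qed

text \<open>x \<cdot> y is primitive: the reduced part of \<Delta>(x \<cdot> y) comes from that of \<Delta> x.\<close>
theorem dot_primitive:
  assumes "primitive sc \<Delta> x" "primitive sc \<Delta> y"
  shows "primitive sc \<Delta> (dot x y)"
  unfolding primitive_def teq_teval
proof (intro allI impI)
  fix \<phi> assume bf: "bilinear_form sc \<phi>"
  have "linF (\<lambda>u. dot u y)" unfolding linF_def by simp
  then have "teval \<phi> (red_map (\<lambda>u. dot u y) (\<Delta> x)) = 0"
    by (rule red_map_primitive[OF assms(1) _ bf])
  then show "teval \<phi> (\<Delta> (dot x y)) = teval \<phi> (prim_tensor (dot x y))"
    by (simp add: coprod_dot_primitive[OF assms(2) bf])
qed

theorem primitive_subspace: "vs.subspace {x. primitive sc \<Delta> x}"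
proof (rule vs.subspaceI)
  have "teval \<phi> (\<Delta> 0) = 0" if bf: "bilinear_form sc \<phi>" for \<phi>
  proof -
    have "teval \<phi> (\<Delta> 0) = teval \<phi> (\<Delta> 0) + teval \<phi> (\<Delta> 0)"
      using teval_\<Delta>_linear(1)[OF bf, of 0 0] by (simp only: add_0)
    then show ?thesis by (metis add_cancel_left_right)
  qed
  then show "0 \<in> {x. primitive sc \<Delta> x}"
    by (simp add: primitive_def teq_teval bilinear_form_laws)
next
  fix x y assume "x \<in> {x. primitive sc \<Delta> x}" "y \<in> {x. primitive sc \<Delta> x}"
  then show "x + y \<in> {x. primitive sc \<Delta> x}"
    by (simp add: primitive_def teq_teval teval_\<Delta>_linear bilinear_form_laws bilinear_form_incl)
next
  fix c x assume "x \<in> {x. primitive sc \<Delta> x}"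
  then show "sc c x \<in> {x. primitive sc \<Delta> x}"
    by (simp add: primitive_def teq_teval teval_\<Delta>_linear bilinear_form_incl algebra_simps)
qed

end

theorem lemma2p3:
  fixes sc :: "'k::field \<Rightarrow> 'h::ab_group_add \<Rightarrow> 'h"
    and q :: 'k
    and prec dot succ :: "'h \<Rightarrow> 'h \<Rightarrow> 'h"
    and \<Delta> :: "'h \<Rightarrow> ('h,'k) tens"
  assumes bialg: "q_tridendriform_bialgebra sc q prec dot succ \<Delta>"
  shows "(\<forall>x zs. primitive sc \<Delta> x \<and> (\<forall>z\<in>set zs. primitive sc \<Delta> z)
              \<longrightarrow> primitive sc \<Delta> (M1 sc q prec dot succ x zs))
       \<and> (\<forall>x y. primitive sc \<Delta> x \<and> primitive sc \<Delta> y \<longrightarrow> primitive sc \<Delta> (dot x y))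
       \<and> module.subspace sc {x. primitive sc \<Delta> x}"
proof -
  interpret qtri_bialgebra sc q prec dot succ \<Delta> by (rule qtri_bialgebra.intro[OF bialg])
  show ?thesis using M_primitive dot_primitive primitive_subspace by blast
qed

end
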